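(* For every single-elimination tournament $\mathcal{T}$ with at least $2$ players and every scoring system $\sigma$ of $\mathcal{T}$, \[\dim(\mathcal{T},\sigma)\ge \max_{x\in M(\mathcal{T})}\Big(|P(x)|-\max_{u\in N^-(x)}|P(u)|\Big).\] Moreover, for every such $\mathcal{T}$ there exists a scoring system $\sigma$ for which equality holds.
   Context: A single-elimination tournament is a finite directed graph $\mathcal{T}$ such that: (a) $\mathcal{T}$ has exactly one sink (vertex with no out-neighbours); (b) every non-sink vertex has exactly one out-neighbour; (c) $\mathcal{T}$ has no directed cycles; (d) $|N^-(v)|\ne 1$ for every vertex $v$, where $N^-(v)$ (resp. $N^+(v)$) denotes the set of in-neighbours (resp. out-neighbours) of $v$. The players $P(\mathcal{T})$ are the sources (vertices with no in-neighbours) and the matches are $M(\mathcal{T})=V(\mathcal{T})\setminus P(\mathcal{T})$. For a vertex $u$, $P(u)$ is the set of players $a$ for which there is a directed walk from $a$ to $u$, i.e. a sequence $(u_1,\dots,u_t)$, $t\ge 1$, with $u_1=a$, $u_t=u$, $u_{i+1}\in N^+(u_i)$ (so $P(a)=\{a\}$ for a player $a$). A bracket is a function $B:V(\mathcal{T})\to P(\mathcal{T})$ with $B(a)=a$ for every player $a$ and $B(x)\in\{B(u):u\in N^-(x)\}$ for every match $x$. A scoring system is any function $\sigma:M(\mathcal{T})\to\mathbb{R}_{>0}$. For brackets $B,B'$ let $\mathrm{score}_\sigma(B,B')=\sum_{x\in M(\mathcal{T}):\,B(x)=B'(x)}\sigma(x)$. A set of brackets $\mathcal{B}$ is $\sigma$-resolving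 if for every pair of distinct brackets $B\ne B'$ there is $B_i\in\mathcal{B}$ with $\mathrm{score}_\sigma(B_i,B)\ne\mathrm{score}_\sigma(B_i,B')$. $\dim(\mathcal{T},\sigma)$ denotes the minimum size of a $\sigma$-resolving set. *)

theory Defs
  imports Main "HOL-Library.Extended_Real" Complex_Main
begin

definition out_nbrs :: "('v \<times> 'v) set \<Rightarrow> 'v \<Rightarrow> 'v set" where
  "out_nbrs E v = {w. (v, w) \<in> E}"

definition in_nbrs :: "('v \<times> 'v) set \<Rightarrow> 'v \<Rightarrow> 'v set" where
  "in_nbrs E v = {u. (u, v) \<in> E}"

definition sinks :: "'v set \<Rightarrow> ('v \<times> 'v) set \<Rightarrow> 'v set" where
  "sinks V E = {v \<in> V. out_nbrs E v = {}}"

definition se_tournament :: "'v set \<Rightarrow> ('v \<times> 'v) set \<Rightarrow> bool" where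
  "se_tournament V E \<longleftrightarrow>
     finite V \<and> E \<subseteq> V \<times> V \<and>
     card (sinks V E) = 1 \<and>
     (\<forall>v\<in>V - sinks V E. card (out_nbrs E v) = 1) \<and>
     acyclic E \<and>
     (\<forall>v\<in>V. card (in_nbrs E v) \<noteq> 1)"

definition players :: "'v set \<Rightarrow> ('v \<times> 'v) set \<Rightarrow> 'v set" where
  "players V E = {v \<in> V. in_nbrs E v = {}}"

definition matches :: "'v set \<Rightarrow> ('v \<times> 'v) set \<Rightarrow> 'v set" where
  "matches V E = V - players V E"

definition players_of :: "'v set \<Rightarrow> ('v \<times> 'v) set \<Rightarrow> 'v \<Rightarrow> 'v set" where
  "players_of V E u = {a \<in> players V E. (a, u) \<in> E\<^sup>*}"

definition brackets :: "'v set \<Rightarrow> ('v \<times> 'v) set \<Rightarrow> ('v \<Rightarrow> 'v) set" where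
  "brackets V E = {B. (\<forall>a\<in>players V E. B a = a) \<and>
                      (\<forall>x\<in>matches V E. B x \<in> B ` in_nbrs E x) \<and>
                      (\<forall>x. x \<notin> V \<longrightarrow> B x = undefined)}"

definition scoring_system :: "'v set \<Rightarrow> ('v \<times> 'v) set \<Rightarrow> ('v \<Rightarrow> real) \<Rightarrow> bool" where
  "scoring_system V E \<sigma> \<longleftrightarrow> (\<forall>x\<in>matches V E. \<sigma> x > 0)"

definition score :: "'v set \<Rightarrow> ('v \<times> 'v) set \<Rightarrow> ('v \<Rightarrow> real) \<Rightarrow> ('v \<Rightarrow> 'v) \<Rightarrow> ('v \<Rightarrow> 'v) \<Rightarrow> real" where
  "score V E \<sigma> B B' = (\<Sum>x\<in>{x \<in> matches V E. B x = B' x}. \<sigma> x)"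

definition resolving :: "'v set \<Rightarrow> ('v \<times> 'v) set \<Rightarrow> ('v \<Rightarrow> real) \<Rightarrow> ('v \<Rightarrow> 'v) set \<Rightarrow> bool" where
  "resolving V E \<sigma> \<B> \<longleftrightarrow> \<B> \<subseteq> brackets V E \<and>
     (\<forall>B\<in>brackets V E. \<forall>B'\<in>brackets V E. B \<noteq> B' \<longrightarrow>
        (\<exists>Bi\<in>\<B>. score V E \<sigma> Bi B \<noteq> score V E \<sigma> Bi B'))"

definition tdim :: "'v set \<Rightarrow> ('v \<times> 'v) set \<Rightarrow> ('v \<Rightarrow> real) \<Rightarrow> nat" where
  "tdim V E \<sigma> = (LEAST k. \<exists>\<B>. resolving V E \<sigma> \<B> \<and> finite \<B> \<and> card \<B> = k)"

definition dim_bound :: "'v set \<Rightarrow> ('v \<times> 'v) set \<Rightarrow> nat" where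
  "dim_bound V E = (MAX x\<in>matches V E.
      card (players_of V E x) - (MAX u\<in>in_nbrs E x. card (players_of V E u)))"

end

theory Submission
  imports Defs "HOL-Library.Product_Lexorder" "HOL-Library.FuncSet" "HOL-Library.Countable_Set"
begin

text \<open>
  Lower bound: let \<open>R\<close> be resolving and \<open>x\<close> a match. If for every in-neighbour \<open>u\<close> of \<open>x\<close>
  some player of \<open>P(x) - P(u)\<close> is never the predicted winner of \<open>x\<close> in \<open>R\<close>, there are two such
  players \<open>a\<close>, \<open>b\<close> coming from different in-neighbours. The two brackets that differ only in
  whether \<open>a\<close> or \<open>b\<close> wins \<open>x\<close> then score equally against every member of \<open>R\<close>. Hence
  \<open>|R| \<ge> |P(x)| - |P(u)|\<close> for some in-neighbour \<open>u\<close>.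

  Upper bound: with \<open>\<sigma>(x) = 2^idx(x)\<close> a score determines the set of matches on which two brackets
  agree. Let \<open>heavy x\<close> be an in-neighbour of \<open>x\<close> with most players and \<open>light x\<close> the players
  of \<open>x\<close> outside it, so \<open>|light x| \<le> dim_bound\<close>. The light sets form a laminar family, so the
  players can be coloured with \<open>dim_bound\<close> colours, injectively on every light set. For each
  colour \<open>i\<close>, let every match be won by its best player under a priority preferring colour \<open>i\<close>;
  in this bracket every light player of \<open>x\<close> of colour \<open>i\<close> wins \<open>x\<close>. So if the winner of \<open>x\<close>
  in an unknown bracket is light at \<open>x\<close>, it is read off from the scores; otherwise it is the winner
  of \<open>heavy x\<close>, and induction over the tournament applies.
\<close>

lemma sum_power2_lessThan: "(\<Sum>k<n. (2::nat) ^ k) < 2 ^ n"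
  by (induction n) auto

lemma sum_power2_less_if_top_differs:
  fixes A B :: "nat set"
  assumes "finite A" "finite B" "m \<in> A" "m \<notin> B" "\<And>k. m < k \<Longrightarrow> k \<in> A \<longleftrightarrow> k \<in> B"
  shows "(\<Sum>k\<in>B. (2::nat) ^ k) < (\<Sum>k\<in>A. 2 ^ k)"
proof -
  let ?C = "{k \<in> B. m < k}" and ?L = "{k \<in> B. k < m}"
  have "B = ?C \<union> ?L"
    using \<open>m \<notin> B\<close> by (auto simp: not_less le_less)
  then have "(\<Sum>k\<in>B. (2::nat) ^ k) = (\<Sum>k\<in>?C. 2 ^ k) + (\<Sum>k\<in>?L. 2 ^ k)"
    using \<open>finite B\<close> by (simp add: sum.union_disjoint[symmetric] disjoint_iff)
  also have "\<dots> < (\<Sum>k\<in>?C. 2 ^ k) + 2 ^ m"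
  proof -
    have "(\<Sum>k\<in>?L. (2::nat) ^ k) \<le> (\<Sum>k<m. 2 ^ k)"
      by (rule sum_mono2) auto
    then show ?thesis
      using sum_power2_lessThan[of m] by linarith
  qed
  also have "\<dots> = (\<Sum>k\<in>insert m ?C. 2 ^ k)"
    using \<open>finite B\<close> by simp
  also have "\<dots> \<le> (\<Sum>k\<in>A. 2 ^ k)"
    using assms by (intro sum_mono2) auto
  finally show ?thesis .
qed

lemma inj_on_sum_power2: "inj_on (\<lambda>A. \<Sum>k\<in>A. (2::nat) ^ k) (Collect finite)"
proof (rule inj_onI, rule ccontr)
  fix A B :: "nat set"
  assume "A \<in> Collect finite" "B \<in> Collect finite"
    and eq: "(\<Sum>k\<in>A. (2::nat) ^ k) = (\<Sum>k\<in>B. 2 ^ k)" and "A \<noteq> B"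
  then have fin: "finite A" "finite B"
    by auto
  let ?D = "(A - B) \<union> (B - A)"
  define m where "m = Max ?D"
  have "finite ?D" "?D \<noteq> {}"
    using fin \<open>A \<noteq> B\<close> by auto
  then have "m \<in> ?D"
    unfolding m_def by (rule Max_in)
  have above: "k \<in> A \<longleftrightarrow> k \<in> B" if "m < k" for k
  proof (rule ccontr)
    assume "\<not> (k \<in> A \<longleftrightarrow> k \<in> B)"
    then have "k \<le> m"
      unfolding m_def using \<open>finite ?D\<close> by (intro Max_ge) auto
    with \<open>m < k\<close> show False
      by simp
  qed
  show False
  proof (cases "m \<in> A")
    case True
    then have "m \<notin> B"
      using \<open>m \<in> ?D\<close> by blast
    then show False
      using sum_power2_less_if_top_differs[OF fin True _ above] eq by simp
  next
    case False
    then have "m \<in> B"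
      using \<open>m \<in> ?D\<close> by blast
    then show False
      using sum_power2_less_if_top_differs[OF fin(2,1) _ False] above eq by simp
  qed
qed

lemma card_rank_less:
  fixes f :: "'a \<Rightarrow> 'b::order"
  assumes "finite S" "a \<in> S"
  shows "card {c \<in> S. f c < f a} < card S"
proof -
  have "a \<notin> {c \<in> S. f c < f a}"
    by simp
  then show ?thesis
    using assms by (intro psubset_card_mono) auto
qed

lemma inj_on_rank:
  fixes f :: "'a \<Rightarrow> 'b::linorder"
  assumes "finite S" "inj_on f S"
  shows "inj_on (\<lambda>a. card {c \<in> S. f c < f a}) S"
proof (rule inj_onI, rule ccontr)
  have less: "card {c \<in> S. f c < f a} < card {c \<in> S. f c < f b}"
    if "a \<in> S" "f a < f b" for a b
    using that \<open>finite S\<close> by (intro psubset_card_mono) auto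
  fix a b assume "a \<in> S" "b \<in> S" "a \<noteq> b"
    and "card {c \<in> S. f c < f a} = card {c \<in> S. f c < f b}"
  moreover have "f a \<noteq> f b"
    using \<open>a \<in> S\<close> \<open>b \<in> S\<close> \<open>a \<noteq> b\<close> \<open>inj_on f S\<close> by (auto dest: inj_onD)
  ultimately show False
    using less[of a b] less[of b a] by (auto simp: neq_iff)
qed

lemma tdim_le_card:
  assumes "resolving V E \<sigma> R" "finite R"
  shows "tdim V E \<sigma> \<le> card R"
  unfolding tdim_def by (rule Least_le) (use assms in blast)

lemma tdim_attained:
  assumes "resolving V E \<sigma> R" "finite R"
  obtains R' where "resolving V E \<sigma> R'" "finite R'" "card R' = tdim V E \<sigma>"
  using LeastI[of "\<lambda>k. \<exists>R. resolving V E \<sigma> R \<and> finite R \<and> card R = k" "card R"] assms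
  unfolding tdim_def by blast

locale tournament =
  fixes V :: "'v set" and E :: "('v \<times> 'v) set"
  assumes se_tournament: "se_tournament V E"
begin

abbreviation "Pl \<equiv> players V E"
abbreviation "M \<equiv> matches V E"
abbreviation "P \<equiv> players_of V E"
abbreviation "idx \<equiv> to_nat_on V"

lemma finite_V: "finite V"
  and edges_subset: "E \<subseteq> V \<times> V"
  and acyclic_E: "acyclic E"
  and in_degree_neq_1: "\<And>v. v \<in> V \<Longrightarrow> card (in_nbrs E v) \<noteq> 1"
  and out_degree_eq_1: "\<And>v. v \<in> V - sinks V E \<Longrightarrow> card (out_nbrs E v) = 1"
  and card_sinks: "card (sinks V E) = 1"
  using se_tournament unfolding se_tournament_def by auto

lemma wf_E: "wf E"
  using finite_acyclic_wf[OF finite_subset[OF edges_subset] acyclic_E] finite_V by blast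

lemma inj_on_idx: "inj_on idx V"
  using countable_finite[OF finite_V] by (rule inj_on_to_nat_on)

lemma players_subset: "Pl \<subseteq> V"
  unfolding players_def by auto

lemma matches_subset: "M \<subseteq> V"
  unfolding matches_def by auto

lemma finite_matches: "finite M"
  using finite_V unfolding matches_def by simp

lemma in_nbrs_subset: "in_nbrs E x \<subseteq> V"
  unfolding in_nbrs_def using edges_subset by auto

lemma finite_in_nbrs: "finite (in_nbrs E x)"
  using finite_subset[OF in_nbrs_subset finite_V] .

lemma in_nbrs_match_nonempty: "x \<in> M \<Longrightarrow> in_nbrs E x \<noteq> {}"
  unfolding matches_def players_def by auto

lemma edge_target_match: "(u, x) \<in> E \<Longrightarrow> x \<in> M"
  using edges_subset unfolding matches_def players_def in_nbrs_def by auto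

lemma out_edge_unique:
  assumes "(v, w) \<in> E" "(v, w') \<in> E"
  shows "w = w'"
proof -
  have "v \<in> V - sinks V E"
    using assms edges_subset unfolding sinks_def out_nbrs_def by auto
  then have "card (out_nbrs E v) = 1"
    by (rule out_degree_eq_1)
  then obtain z where "out_nbrs E v = {z}"
    by (auto simp: card_Suc_eq)
  then show ?thesis
    using assms unfolding out_nbrs_def by (metis mem_Collect_eq singletonD)
qed

lemma rtrancl_comparable:
  assumes "(a, b) \<in> E\<^sup>*" "(a, c) \<in> E\<^sup>*"
  shows "(b, c) \<in> E\<^sup>* \<or> (c, b) \<in> E\<^sup>*"
  using assms
proof (induction rule: converse_rtrancl_induct)
  case base
  then show ?case by simp
next
  case (step a a')
  from step.prems show ?case
  proof (cases rule: converse_rtranclE)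
    case base
    then show ?thesis
      using step.hyps by (blast intro: converse_rtrancl_into_rtrancl)
  next
    case (step a'')
    then have "a'' = a'"
      using out_edge_unique \<open>(a, a') \<in> E\<close> by blast
    then show ?thesis
      using step.IH step by blast
  qed
qed

lemma players_of_subset: "P x \<subseteq> Pl"
  unfolding players_of_def by auto

lemma finite_players_of: "finite (P x)"
  using finite_subset[OF order_trans[OF players_of_subset players_subset] finite_V] .

lemma players_of_mono: "(y, z) \<in> E\<^sup>* \<Longrightarrow> P y \<subseteq> P z"
  unfolding players_of_def by auto

lemma players_of_edge: "(y, z) \<in> E \<Longrightarrow> P y \<subseteq> P z"
  by (rule players_of_mono) blast

lemma comparable_if_common_player:
  "a \<in> P y \<Longrightarrow> a \<in> P z \<Longrightarrow> (y, z) \<in> E\<^sup>* \<or> (z, y) \<in> E\<^sup>*"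
  unfolding players_of_def using rtrancl_comparable by blast

lemma players_of_player: "a \<in> Pl \<Longrightarrow> P a = {a}"
  unfolding players_of_def players_def in_nbrs_def by (auto elim: rtranclE)

lemma players_of_match: "x \<in> M \<Longrightarrow> P x = (\<Union>u\<in>in_nbrs E x. P u)"
  unfolding players_of_def matches_def in_nbrs_def by (auto elim: rtranclE)

lemma players_of_nonempty: "y \<in> V \<Longrightarrow> P y \<noteq> {}"
proof (induction y rule: wf_induct_rule[OF wf_E])
  case (1 y)
  show ?case
  proof (cases "y \<in> Pl")
    case True
    then show ?thesis by (simp add: players_of_player)
  next
    case False
    with 1 obtain u where "u \<in> in_nbrs E y"
      using in_nbrs_match_nonempty unfolding matches_def by blast
    with 1 show ?thesis
      using in_nbrs_subset players_of_edge unfolding in_nbrs_def by blast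
  qed
qed

lemma in_nbrs_incomparable:
  assumes "(u, x) \<in> E" "(u', x) \<in> E" "(u, u') \<in> E\<^sup>*"
  shows "u = u'"
  using assms(3)
proof (cases rule: converse_rtranclE)
  case (step w)
  then have "w = x"
    using assms(1) out_edge_unique by blast
  then have "(x, x) \<in> E\<^sup>+"
    using step assms(2) by auto
  then show ?thesis
    using acyclic_E unfolding acyclic_def by blast
qed simp

lemma in_nbr_unique:
  assumes "(u, x) \<in> E" "(u', x) \<in> E" "a \<in> P u" "a \<in> P u'"
  shows "u = u'"
  using comparable_if_common_player[OF assms(3,4)]
    in_nbrs_incomparable[OF assms(1,2)] in_nbrs_incomparable[OF assms(2,1)] by blast

lemma players_of_edge_psubset:
  assumes xy: "(x, y) \<in> E"
  shows "P x \<subset> P y"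
proof -
  have "y \<in> M" "x \<in> in_nbrs E y"
    using xy edge_target_match unfolding in_nbrs_def by auto
  have "in_nbrs E y \<noteq> {x}"
    using \<open>y \<in> M\<close> matches_subset in_degree_neq_1 by fastforce
  then obtain v where v: "v \<in> in_nbrs E y" "v \<noteq> x"
    using \<open>x \<in> in_nbrs E y\<close> by blast
  then obtain z where z: "z \<in> P v"
    using players_of_nonempty in_nbrs_subset by blast
  have vy: "(v, y) \<in> E"
    using v unfolding in_nbrs_def by simp
  have "z \<in> P y"
    using players_of_edge[OF vy] z by blast
  moreover have "z \<notin> P x"
    using in_nbr_unique[OF xy vy _ z] v(2) by blast
  ultimately show ?thesis
    using players_of_edge[OF xy] by blast
qed

lemma bracket_player: "B \<in> brackets V E \<Longrightarrow> a \<in> Pl \<Longrightarrow> B a = a"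
  and bracket_outside: "B \<in> brackets V E \<Longrightarrow> y \<notin> V \<Longrightarrow> B y = undefined"
  unfolding brackets_def by auto

lemma bracket_match:
  assumes "B \<in> brackets V E" "x \<in> M"
  obtains u where "u \<in> in_nbrs E x" "B x = B u"
proof -
  have "B x \<in> B ` in_nbrs E x"
    using assms by (simp add: brackets_def)
  then show thesis
    using that by blast
qed

lemma bracket_in_players_of:
  assumes B: "B \<in> brackets V E"
  shows "x \<in> V \<Longrightarrow> B x \<in> P x"
proof (induction x rule: wf_induct_rule[OF wf_E])
  case (1 x)
  show ?case
  proof (cases "x \<in> Pl")
    case True
    then show ?thesis
      using bracket_player[OF B] players_of_player by simp
  next
    case False
    with 1 have "x \<in> M"
      unfolding matches_def by blast
    with B obtain u where u: "u \<in> in_nbrs E x" "B x = B u"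
      by (rule bracket_match)
    then have ux: "(u, x) \<in> E" and "u \<in> V"
      using in_nbrs_subset unfolding in_nbrs_def by auto
    then have "B u \<in> P u"
      using 1 by blast
    then show ?thesis
      using u(2) players_of_edge[OF ux] by auto
  qed
qed

lemma finite_brackets: "finite (brackets V E)"
proof (rule finite_subset)
  show "brackets V E \<subseteq> PiE V (\<lambda>_. V)"
  proof
    fix B assume B: "B \<in> brackets V E"
    then have "B x \<in> V" if "x \<in> V" for x
      using bracket_in_players_of[OF B that] players_of_subset players_subset by blast
    then show "B \<in> PiE V (\<lambda>_. V)"
      using bracket_outside[OF B] by (auto simp: PiE_iff extensional_def)
  qed
  show "finite (PiE V (\<lambda>_. V))"
    using finite_V by (simp add: finite_PiE)
qed

lemma bracket_update:
  assumes B: "B \<in> brackets V E" and x: "x \<in> M" and w: "w \<in> in_nbrs E x"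
    and above: "\<And>y. (x, y) \<in> E \<Longrightarrow> B y \<noteq> B x"
  shows "B(x := B w) \<in> brackets V E"
proof -
  have "x \<in> V" "x \<notin> Pl"
    using x unfolding matches_def by auto
  show ?thesis
    unfolding brackets_def
  proof (intro CollectI conjI ballI allI impI)
    fix a assume "a \<in> Pl"
    then show "(B(x := B w)) a = a"
      using bracket_player[OF B] \<open>x \<notin> Pl\<close> by auto
  next
    fix y assume "y \<notin> V"
    then show "(B(x := B w)) y = undefined"
      using bracket_outside[OF B] \<open>x \<in> V\<close> by auto
  next
    fix y assume y: "y \<in> M"
    show "(B(x := B w)) y \<in> B(x := B w) ` in_nbrs E y"
    proof (cases "y = x")
      case True
      have "x \<notin> in_nbrs E x"
        using acyclic_E unfolding acyclic_def in_nbrs_def by blast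
      then show ?thesis
        using True w by (intro image_eqI[of _ _ w]) auto
    next
      case False
      obtain u where u: "u \<in> in_nbrs E y" "B y = B u"
        using B y by (rule bracket_match)
      then have "u \<noteq> x"
        using above[of y] unfolding in_nbrs_def by auto
      then show ?thesis
        using False u by (intro image_eqI[of _ _ u]) auto
    qed
  qed
qed

definition winner :: "('v \<Rightarrow> 'k::linorder) \<Rightarrow> 'v \<Rightarrow> 'v" where
  "winner \<pi> y = (if y \<in> V then arg_min_on \<pi> (P y) else undefined)"

lemma winner_in_players_of: "y \<in> V \<Longrightarrow> winner \<pi> y \<in> P y"
  unfolding winner_def
  using arg_min_if_finite(1)[OF finite_players_of players_of_nonempty] by simp

lemma winner_le: "y \<in> V \<Longrightarrow> b \<in> P y \<Longrightarrow> \<pi> (winner \<pi> y) \<le> \<pi> b"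
  unfolding winner_def
  using arg_min_least[OF finite_players_of players_of_nonempty] by simp

lemma winner_eqI:
  assumes "inj_on \<pi> Pl" "y \<in> V" "a \<in> P y" "\<And>b. b \<in> P y \<Longrightarrow> \<pi> a \<le> \<pi> b"
  shows "winner \<pi> y = a"
proof -
  have "inj_on \<pi> {b. b \<in> P y}"
    using inj_on_subset[OF assms(1) players_of_subset] by simp
  then show ?thesis
    unfolding winner_def arg_min_on_def using assms(2-4) by (simp add: arg_min_inj_eq)
qed

lemma winner_bracket:
  assumes inj: "inj_on \<pi> Pl"
  shows "winner \<pi> \<in> brackets V E"
  unfolding brackets_def
proof (intro CollectI conjI ballI allI impI)
  fix a assume "a \<in> Pl"
  then show "winner \<pi> a = a"
    using players_subset players_of_player by (intro winner_eqI[OF inj]) auto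
next
  fix y :: 'v assume "y \<notin> V"
  then show "winner \<pi> y = undefined"
    unfolding winner_def by simp
next
  fix x assume x: "x \<in> M"
  then have "x \<in> V"
    using matches_subset by blast
  then obtain u where u: "u \<in> in_nbrs E x" "winner \<pi> x \<in> P u"
    using winner_in_players_of players_of_match[OF x] by blast
  have "winner \<pi> u = winner \<pi> x"
  proof (rule winner_eqI[OF inj _ u(2)])
    show "u \<in> V"
      using u(1) in_nbrs_subset by blast
    show "\<pi> (winner \<pi> x) \<le> \<pi> b" if "b \<in> P u" for b
      using winner_le[OF \<open>x \<in> V\<close>] that u(1) players_of_match[OF x] by blast
  qed
  then show "winner \<pi> x \<in> winner \<pi> ` in_nbrs E x"
    using u(1) by (metis image_eqI)
qed

lemma brackets_differing_at:
  assumes x: "x \<in> M" and vx: "(v, x) \<in> E" and wx: "(w, x) \<in> E" and "v \<noteq> w"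
    and p: "p \<in> P v" and q: "q \<in> P w"
  obtains B where "B \<in> brackets V E" "B x = p" "B(x := q) \<in> brackets V E"
proof -
  \<comment> \<open>Players outside \<open>P x\<close> come first, so the matches above \<open>x\<close> are not won by \<open>p\<close>
    and the result of \<open>x\<close> alone can be switched to \<open>q\<close>.\<close>
  define \<pi> where "\<pi> a = (a \<in> P x, a \<noteq> p, a \<noteq> q, idx a)" for a
  have inj: "inj_on \<pi> Pl"
    using inj_on_subset[OF inj_on_idx players_subset] unfolding \<pi>_def inj_on_def by simp
  let ?B = "winner \<pi>"
  have "x \<in> V" "w \<in> V"
    using x vx wx matches_subset edges_subset by auto
  have px: "p \<in> P x" and qw_x: "P w \<subseteq> P x"
    using p players_of_edge[OF vx] players_of_edge[OF wx] by auto
  have "p \<notin> P w"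
    using in_nbr_unique[OF vx wx p] \<open>v \<noteq> w\<close> by blast
  have Bx: "?B x = p"
    using \<open>x \<in> V\<close> px by (intro winner_eqI[OF inj]) (auto simp: \<pi>_def)
  have Bw: "?B w = q"
    using \<open>w \<in> V\<close> q qw_x \<open>p \<notin> P w\<close> by (intro winner_eqI[OF inj]) (auto simp: \<pi>_def)
  have "?B y \<noteq> ?B x" if xy: "(x, y) \<in> E" for y
  proof -
    obtain z where z: "z \<in> P y" "z \<notin> P x"
      using players_of_edge_psubset[OF xy] by blast
    have "y \<in> V"
      using xy edges_subset by blast
    have "\<pi> (?B y) \<le> \<pi> z"
      using winner_le[OF \<open>y \<in> V\<close> z(1)] .
    then have "?B y \<notin> P x"
      using z(2) by (auto simp: \<pi>_def)
    then show ?thesis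
      using Bx px by metis
  qed
  then have "?B(x := ?B w) \<in> brackets V E"
    using bracket_update[OF winner_bracket[OF inj] x] wx unfolding in_nbrs_def by blast
  then show thesis
    using that winner_bracket[OF inj] Bx Bw by simp
qed

lemma resolving_covers_outside_in_nbr:
  assumes R: "resolving V E \<sigma> R" and x: "x \<in> M"
  shows "\<exists>u\<in>in_nbrs E x. P x - P u \<subseteq> (\<lambda>B. B x) ` R"
proof (rule ccontr)
  let ?S = "(\<lambda>B. B x) ` R"
  assume "\<not> ?thesis"
  then have missed: "\<exists>a\<in>P x - P u. a \<notin> ?S" if "u \<in> in_nbrs E x" for u
    using that by blast
  obtain u0 where "u0 \<in> in_nbrs E x"
    using in_nbrs_match_nonempty[OF x] by blast
  then obtain a where a: "a \<in> P x" "a \<notin> ?S"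
    using missed by blast
  then obtain v where v: "v \<in> in_nbrs E x" "a \<in> P v"
    using players_of_match[OF x] by blast
  then obtain b where b: "b \<in> P x" "b \<notin> P v" "b \<notin> ?S"
    using missed by blast
  then obtain w where w: "w \<in> in_nbrs E x" "b \<in> P w"
    using players_of_match[OF x] by blast
  have "v \<noteq> w"
    using v w b by blast
  then obtain B where B: "B \<in> brackets V E" "B x = a" "B(x := b) \<in> brackets V E"
    using brackets_differing_at[OF x _ _ _ v(2) w(2)] v(1) w(1) unfolding in_nbrs_def by blast
  have "a \<noteq> b"
    using v(2) b(2) by blast
  then have "B \<noteq> B(x := b)"
    using B(2) by (metis fun_upd_same)
  then obtain Bi where Bi: "Bi \<in> R" "score V E \<sigma> Bi B \<noteq> score V E \<sigma> Bi (B(x := b))"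
    using R B(1,3) unfolding resolving_def by blast
  have "Bi x \<noteq> a" "Bi x \<noteq> b"
    using Bi(1) a(2) b(3) by (metis image_eqI)+
  then have "{y \<in> M. Bi y = B y} = {y \<in> M. Bi y = (B(x := b)) y}"
    using B(2) by auto
  then show False
    using Bi(2) unfolding score_def by simp
qed

lemma dim_bound_le_card_resolving:
  assumes R: "resolving V E \<sigma> R" "finite R" and "M \<noteq> {}"
  shows "dim_bound V E \<le> card R"
  unfolding dim_bound_def
proof (rule Max.boundedI)
  show "finite ((\<lambda>x. card (P x) - (MAX u\<in>in_nbrs E x. card (P u))) ` M)"
    using finite_matches by simp
  show "(\<lambda>x. card (P x) - (MAX u\<in>in_nbrs E x. card (P u))) ` M \<noteq> {}"
    using \<open>M \<noteq> {}\<close> by simp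
  fix k assume "k \<in> (\<lambda>x. card (P x) - (MAX u\<in>in_nbrs E x. card (P u))) ` M"
  then obtain x where x: "x \<in> M" and k: "k = card (P x) - (MAX u\<in>in_nbrs E x. card (P u))"
    by blast
  obtain u where u: "u \<in> in_nbrs E x" "P x - P u \<subseteq> (\<lambda>B. B x) ` R"
    using resolving_covers_outside_in_nbr[OF R(1) x] by blast
  have "k \<le> card (P x) - card (P u)"
    unfolding k using finite_in_nbrs u(1) by (intro diff_le_mono2) simp
  also have "\<dots> \<le> card (P x - P u)"
    using finite_players_of by (rule diff_card_le_card_Diff)
  also have "\<dots> \<le> card ((\<lambda>B. B x) ` R)"
    using u(2) R(2) by (intro card_mono) auto
  also have "\<dots> \<le> card R"
    using R(2) by (rule card_image_le)
  finally show "k \<le> card R" .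
qed

lemma brackets_resolving:
  assumes \<sigma>: "scoring_system V E \<sigma>"
  shows "resolving V E \<sigma> (brackets V E)"
  unfolding resolving_def
proof (intro conjI ballI impI subset_refl)
  fix B B' assume B: "B \<in> brackets V E" and B': "B' \<in> brackets V E" and "B \<noteq> B'"
  then obtain y where y: "B y \<noteq> B' y"
    by (meson ext)
  have "y \<in> V"
    using y bracket_outside[OF B] bracket_outside[OF B'] by metis
  moreover have "y \<notin> Pl"
    using y bracket_player[OF B] bracket_player[OF B'] by metis
  ultimately have "y \<in> M"
    unfolding matches_def by simp
  let ?A = "{x \<in> M. B x = B' x}"
  have "0 < sum \<sigma> (M - ?A)"
    using \<sigma> finite_matches \<open>y \<in> M\<close> y unfolding scoring_system_def by (intro sum_pos) auto
  moreover have "sum \<sigma> M = sum \<sigma> (M - ?A) + sum \<sigma> ?A"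
    using finite_matches by (intro sum.subset_diff) auto
  ultimately have "score V E \<sigma> B B' \<noteq> score V E \<sigma> B B"
    unfolding score_def by simp
  then show "\<exists>Bi\<in>brackets V E. score V E \<sigma> Bi B \<noteq> score V E \<sigma> Bi B'"
    using B by metis
qed

lemma tdim_ge_dim_bound:
  assumes "scoring_system V E \<sigma>" "M \<noteq> {}"
  shows "dim_bound V E \<le> tdim V E \<sigma>"
proof -
  obtain R where "resolving V E \<sigma> R" "finite R" "card R = tdim V E \<sigma>"
    using tdim_attained[OF brackets_resolving[OF assms(1)] finite_brackets] .
  then show ?thesis
    using dim_bound_le_card_resolving assms(2) by metis
qed

lemma matches_nonempty:
  assumes "card Pl \<ge> 2"
  shows "M \<noteq> {}"
proof
  assume "M = {}"
  then have "E = {}"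
    by (auto dest: edge_target_match)
  then have "sinks V E = V"
    unfolding sinks_def out_nbrs_def by simp
  then have "card Pl \<le> 1"
    using card_sinks card_mono[OF finite_V players_subset] by simp
  with assms show False
    by simp
qed

definition heavy :: "'v \<Rightarrow> 'v" where
  "heavy x = (SOME u. u \<in> in_nbrs E x \<and> card (P u) = (MAX u'\<in>in_nbrs E x. card (P u')))"

definition light :: "'v \<Rightarrow> 'v set" where
  "light x = P x - P (heavy x)"

lemma heavy_in_nbrs: "x \<in> M \<Longrightarrow> heavy x \<in> in_nbrs E x"
  and card_players_of_heavy: "x \<in> M \<Longrightarrow> card (P (heavy x)) = (MAX u\<in>in_nbrs E x. card (P u))"
proof -
  assume "x \<in> M"
  have "(MAX u\<in>in_nbrs E x. card (P u)) \<in> (\<lambda>u. card (P u)) ` in_nbrs E x"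
    using finite_in_nbrs in_nbrs_match_nonempty[OF \<open>x \<in> M\<close>] by (intro Max_in) auto
  then have "\<exists>u. u \<in> in_nbrs E x \<and> card (P u) = (MAX u'\<in>in_nbrs E x. card (P u'))"
    by (metis imageE)
  then show "heavy x \<in> in_nbrs E x" "card (P (heavy x)) = (MAX u\<in>in_nbrs E x. card (P u))"
    unfolding heavy_def by (metis (mono_tags, lifting) someI_ex)+
qed

lemma heavy_edge: "x \<in> M \<Longrightarrow> (heavy x, x) \<in> E"
  using heavy_in_nbrs unfolding in_nbrs_def by blast

lemma light_subset: "light x \<subseteq> P x"
  unfolding light_def by blast

lemma finite_light: "finite (light x)"
  using finite_subset[OF light_subset finite_players_of] .

lemma card_light_le_dim_bound:
  assumes x: "x \<in> M"
  shows "card (light x) \<le> dim_bound V E"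
proof -
  have "card (light x) = card (P x) - (MAX u\<in>in_nbrs E x. card (P u))"
    unfolding light_def card_players_of_heavy[OF x, symmetric]
    using finite_players_of players_of_edge[OF heavy_edge[OF x]] by (rule card_Diff_subset)
  also have "\<dots> \<le> dim_bound V E"
    unfolding dim_bound_def using finite_matches x by (intro Max_ge) auto
  finally show ?thesis .
qed

lemma players_of_below_light:
  assumes a: "a \<in> P y" "a \<in> light z" and yv: "(y, v) \<in> E\<^sup>*" and vz: "(v, z) \<in> E"
  shows "P y \<subseteq> light z"
proof -
  have z: "z \<in> M"
    using vz by (rule edge_target_match)
  have av: "a \<in> P v"
    using a(1) players_of_mono[OF yv] by blast
  have "b \<notin> P (heavy z)" if "b \<in> P v" for b
  proof
    assume "b \<in> P (heavy z)"
    then have "v = heavy z"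
      using in_nbr_unique[OF vz heavy_edge[OF z] that] by blast
    then show False
      using av a(2) unfolding light_def by blast
  qed
  then have "P v \<subseteq> light z"
    using players_of_edge[OF vz] unfolding light_def by blast
  then show ?thesis
    using players_of_mono[OF yv] by blast
qed

lemma light_mono:
  assumes "(z, z') \<in> E\<^sup>*" "a \<in> P z" "a \<in> light z'"
  shows "light z \<subseteq> light z'"
  using assms(1)
proof (cases rule: rtranclE)
  case (step v)
  then show ?thesis
    using players_of_below_light[OF assms(2,3)] light_subset by blast
qed simp

lemma light_laminar:
  assumes "a \<in> light z" "a \<in> light z'"
  shows "light z \<subseteq> light z' \<or> light z' \<subseteq> light z"
  using comparable_if_common_player[of a z z'] assms light_subset light_mono by blast

definition max_light :: "'v \<Rightarrow> 'v set" where
  "max_light a = \<Union> (light ` {z \<in> M. a \<in> light z})"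

lemma max_light_is_light:
  assumes "x \<in> M" "a \<in> light x"
  obtains z where "z \<in> M" "a \<in> light z" "max_light a = light z"
proof -
  let ?L = "light ` {z \<in> M. a \<in> light z}"
  have "subset.chain ?L ?L"
    unfolding subset_chain_def using light_laminar by blast
  moreover have "finite ?L" "?L \<noteq> {}"
    using finite_matches assms by auto
  ultimately have "\<Union>?L \<in> ?L"
    using Union_in_chain by blast
  then show thesis
    using that unfolding max_light_def by blast
qed

lemma light_subset_max_light: "x \<in> M \<Longrightarrow> a \<in> light x \<Longrightarrow> light x \<subseteq> max_light a"
  unfolding max_light_def by blast

lemma max_light_eq:
  assumes x: "x \<in> M" and "a \<in> light x" "b \<in> light x"
  shows "max_light a = max_light b"
proof -
  have "max_light a \<subseteq> max_light b" if "a \<in> light x" "b \<in> light x" for a b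
  proof -
    obtain z where z: "z \<in> M" "max_light a = light z"
      using max_light_is_light[OF x \<open>a \<in> light x\<close>] by blast
    then have "b \<in> light z"
      using light_subset_max_light[OF x \<open>a \<in> light x\<close>] \<open>b \<in> light x\<close> by blast
    then show ?thesis
      using z light_subset_max_light by simp
  qed
  then show ?thesis
    using assms by blast
qed

definition colour :: "'v \<Rightarrow> nat" where
  "colour a = card {b \<in> max_light a. idx b < idx a}"

lemma colour_inj_on_light:
  assumes x: "x \<in> M"
  shows "inj_on colour (light x)"
proof (rule inj_onI)
  fix a b assume a: "a \<in> light x" and b: "b \<in> light x" and "colour a = colour b"
  let ?S = "max_light a"
  obtain z where z: "max_light a = light z"
    using max_light_is_light[OF x a] by blast
  then have "finite ?S"
    using finite_light by simp
  moreover have "light z \<subseteq> V"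
    using light_subset[of z] players_of_subset[of z] players_subset by blast
  then have "inj_on idx ?S"
    unfolding z by (rule inj_on_subset[OF inj_on_idx])
  moreover have "a \<in> ?S" "b \<in> ?S"
    using light_subset_max_light[OF x a] a b by auto
  moreover have "card {c \<in> ?S. idx c < idx a} = card {c \<in> ?S. idx c < idx b}"
    using \<open>colour a = colour b\<close> max_light_eq[OF x a b] unfolding colour_def by simp
  ultimately show "a = b"
    by (auto dest: inj_onD[OF inj_on_rank])
qed

lemma colour_less_dim_bound:
  assumes x: "x \<in> M" and a: "a \<in> light x"
  shows "colour a < dim_bound V E"
proof -
  obtain z where z: "z \<in> M" "a \<in> light z" "max_light a = light z"
    using max_light_is_light[OF x a] .
  then have "colour a < card (light z)"
    unfolding colour_def using card_rank_less[OF finite_light] by simp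
  also have "\<dots> \<le> dim_bound V E"
    using card_light_le_dim_bound[OF z(1)] .
  finally show ?thesis .
qed

definition light_reach :: "'v \<Rightarrow> 'v set" where
  "light_reach a = \<Union> (P ` {z \<in> M. a \<in> light z})"

lemma finite_light_reach: "finite (light_reach a)"
proof (rule finite_subset)
  show "light_reach a \<subseteq> V"
    unfolding light_reach_def using players_of_subset players_subset by blast
qed (rule finite_V)

lemma players_of_subset_light_reach: "x \<in> M \<Longrightarrow> a \<in> light x \<Longrightarrow> P x \<subseteq> light_reach a"
  unfolding light_reach_def by blast

lemma light_reach_subset_heavy:
  assumes x: "x \<in> M" and a: "a \<in> light x" and b: "b \<in> P (heavy x)" and "colour a = colour b"
  shows "light_reach b \<subseteq> P (heavy x)"
  unfolding light_reach_def
proof (rule UN_least)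
  fix z assume "z \<in> {z \<in> M. b \<in> light z}"
  then have z: "z \<in> M" "b \<in> light z"
    by auto
  have bx: "b \<in> P x"
    using b players_of_edge[OF heavy_edge[OF x]] by blast
  have "b \<notin> light x"
    using b unfolding light_def by blast
  consider "(z, x) \<in> E\<^sup>*" | "(x, z) \<in> E\<^sup>*"
    using comparable_if_common_player[OF _ bx] z(2) light_subset by blast
  then show "P z \<subseteq> P (heavy x)"
  proof cases
    case 1
    then show ?thesis
    proof (cases rule: rtranclE)
      case base
      then show ?thesis
        using z(2) \<open>b \<notin> light x\<close> by simp
    next
      case (step u)
      have "b \<in> P u"
        using z(2) light_subset players_of_mono[OF step(1)] by blast
      then have "u = heavy x"
        using in_nbr_unique[OF step(2) heavy_edge[OF x] _ b] by blast
      then show ?thesis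
        using players_of_mono[OF step(1)] by simp
    qed
  next
    case 2
    then have "a \<in> light z"
      using light_mono[OF _ bx z(2)] a by blast
    then have "a = b"
      using inj_onD[OF colour_inj_on_light[OF z(1)] \<open>colour a = colour b\<close>] z(2) by blast
    then show ?thesis
      using a \<open>b \<notin> light x\<close> by simp
  qed
qed

lemma card_light_reach_less:
  assumes x: "x \<in> M" and a: "a \<in> light x" and b: "b \<in> P (heavy x)" and "colour a = colour b"
  shows "card (light_reach b) < card (light_reach a)"
proof -
  have "card (light_reach b) \<le> card (P (heavy x))"
    using light_reach_subset_heavy[OF assms] finite_players_of by (rule card_mono[rotated])
  also have "\<dots> < card (P x)"
    using a players_of_edge[OF heavy_edge[OF x]] finite_players_of
    unfolding light_def by (intro psubset_card_mono) auto
  also have "\<dots> \<le> card (light_reach a)"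
    using players_of_subset_light_reach[OF x a] finite_light_reach by (rule card_mono[rotated])
  finally show ?thesis .
qed

text \<open>A player \<open>a\<close> light at \<open>x\<close> beats at \<open>x\<close> every other player \<open>b\<close> of its colour: \<open>b\<close> lies
  in \<open>P (heavy x)\<close>, and so does every match at which \<open>b\<close> is light, whereas the light reach
  of \<open>a\<close> contains \<open>P x\<close>.\<close>

definition colour_priority :: "nat \<Rightarrow> 'v \<Rightarrow> bool \<times> int \<times> nat" where
  "colour_priority i a = (colour a \<noteq> i, - int (card (light_reach a)), idx a)"

lemma inj_on_colour_priority: "inj_on (colour_priority i) Pl"
  using inj_on_subset[OF inj_on_idx players_subset] unfolding colour_priority_def inj_on_def by simp

lemma winner_colour_priority:
  assumes x: "x \<in> M" and a: "a \<in> light x"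
  shows "winner (colour_priority (colour a)) x = a"
proof (rule winner_eqI[OF inj_on_colour_priority])
  show "x \<in> V" "a \<in> P x"
    using x a matches_subset light_subset by auto
  fix b assume b: "b \<in> P x"
  show "colour_priority (colour a) a \<le> colour_priority (colour a) b"
  proof (cases "colour b = colour a \<and> b \<noteq> a")
    case True
    then have "b \<notin> light x"
      using inj_onD[OF colour_inj_on_light[OF x]] a by blast
    then have "b \<in> P (heavy x)"
      using b unfolding light_def by blast
    then have "card (light_reach b) < card (light_reach a)"
      using card_light_reach_less[OF x a] True by simp
    then show ?thesis
      using True unfolding colour_priority_def by simp
  next
    case False
    then show ?thesis
      unfolding colour_priority_def by auto
  qed
qed

definition power2_scoring :: "'v \<Rightarrow> real" where
  "power2_scoring x = 2 ^ idx x"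

lemma scoring_system_power2: "scoring_system V E power2_scoring"
  unfolding scoring_system_def power2_scoring_def by simp

lemma sum_power2_scoring_inj:
  assumes "X \<subseteq> V" "Y \<subseteq> V" "sum power2_scoring X = sum power2_scoring Y"
  shows "X = Y"
proof -
  have sum_eq: "sum power2_scoring Z = real (\<Sum>k\<in>idx ` Z. (2::nat) ^ k)" if "Z \<subseteq> V" for Z
    using inj_on_subset[OF inj_on_idx that]
    unfolding power2_scoring_def by (simp add: sum.reindex)
  have "finite X" "finite Y"
    using assms(1,2) finite_V finite_subset by auto
  moreover have "(\<Sum>k\<in>idx ` X. (2::nat) ^ k) = (\<Sum>k\<in>idx ` Y. 2 ^ k)"
    using assms(3) unfolding sum_eq[OF assms(1)] sum_eq[OF assms(2)] by (simp only: of_nat_eq_iff)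
  ultimately have "idx ` X = idx ` Y"
    by (intro inj_onD[OF inj_on_sum_power2]) auto
  then show ?thesis
    using inj_on_image_eq_iff[OF inj_on_idx assms(1,2)] by simp
qed

lemma score_power2_eq_imp_agree:
  assumes "score V E power2_scoring B0 B = score V E power2_scoring B0 B'"
  shows "{y \<in> M. B0 y = B y} = {y \<in> M. B0 y = B' y}"
  using assms matches_subset unfolding score_def by (intro sum_power2_scoring_inj) auto

lemma bracket_heavy:
  assumes B: "B \<in> brackets V E" and x: "x \<in> M" and "B x \<notin> light x"
  shows "B x = B (heavy x)"
proof -
  obtain u where u: "u \<in> in_nbrs E x" "B x = B u"
    using B x by (rule bracket_match)
  then have ux: "(u, x) \<in> E" and "u \<in> V"
    using in_nbrs_subset unfolding in_nbrs_def by auto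
  have "B x \<in> P (heavy x)"
    using bracket_in_players_of[OF B] x matches_subset \<open>B x \<notin> light x\<close> unfolding light_def by blast
  then have "u = heavy x"
    using in_nbr_unique[OF ux heavy_edge[OF x]] bracket_in_players_of[OF B \<open>u \<in> V\<close>] u(2) by simp
  then show ?thesis
    using u(2) by simp
qed

lemma colour_brackets_separate:
  assumes B: "B \<in> brackets V E" and B': "B' \<in> brackets V E"
    and same: "\<And>i. i < dim_bound V E \<Longrightarrow>
      score V E power2_scoring (winner (colour_priority i)) B =
      score V E power2_scoring (winner (colour_priority i)) B'"
  shows "B = B'"
proof -
  let ?F = "\<lambda>i. winner (colour_priority i)"
  have light_case: "B x = B' x" if x: "x \<in> M" and "B x \<in> light x \<or> B' x \<in> light x" for x
  proof -
    obtain c where c: "c \<in> light x" "c = B x \<or> c = B' x"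
      using \<open>B x \<in> light x \<or> B' x \<in> light x\<close> by blast
    have "colour c < dim_bound V E"
      using colour_less_dim_bound[OF x c(1)] .
    then have "{y \<in> M. ?F (colour c) y = B y} = {y \<in> M. ?F (colour c) y = B' y}"
      using same score_power2_eq_imp_agree by blast
    then have "?F (colour c) x = B x \<longleftrightarrow> ?F (colour c) x = B' x"
      using x by blast
    moreover have "?F (colour c) x = c"
      using winner_colour_priority[OF x c(1)] .
    ultimately show ?thesis
      using c(2) by auto
  qed
  have "B x = B' x" if "x \<in> V" for x
    using that
  proof (induction x rule: wf_induct_rule[OF wf_E])
    case (1 x)
    show ?case
    proof (cases "x \<in> Pl")
      case True
      then show ?thesis
        using bracket_player[OF B] bracket_player[OF B'] by simp
    next
      case False
      with 1 have x: "x \<in> M"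
        unfolding matches_def by blast
      show ?thesis
      proof (cases "B x \<in> light x \<or> B' x \<in> light x")
        case True
        then show ?thesis
          using light_case[OF x] by blast
      next
        case False
        then have "B x = B (heavy x)" "B' x = B' (heavy x)"
          using bracket_heavy[OF B x] bracket_heavy[OF B' x] by auto
        moreover have "B (heavy x) = B' (heavy x)"
          using 1 heavy_edge[OF x] edges_subset by blast
        ultimately show ?thesis
          by simp
      qed
    qed
  qed
  then show ?thesis
    using bracket_outside[OF B] bracket_outside[OF B'] by (metis ext)
qed

lemma colour_brackets_resolving:
  "resolving V E power2_scoring ((\<lambda>i. winner (colour_priority i)) ` {..<dim_bound V E})"
  unfolding resolving_def
proof (intro conjI ballI impI)
  show "(\<lambda>i. winner (colour_priority i)) ` {..<dim_bound V E} \<subseteq> brackets V E"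
    using winner_bracket[OF inj_on_colour_priority] by blast
  fix B B' assume "B \<in> brackets V E" "B' \<in> brackets V E" "B \<noteq> B'"
  then show "\<exists>Bi\<in>(\<lambda>i. winner (colour_priority i)) ` {..<dim_bound V E}.
      score V E power2_scoring Bi B \<noteq> score V E power2_scoring Bi B'"
    using colour_brackets_separate by blast
qed

end

theorem theorem1p8:
  fixes V :: "'v set" and E :: "('v \<times> 'v) set"
  assumes "se_tournament V E"
    and "card (players V E) \<ge> 2"
  shows "(\<forall>\<sigma>. scoring_system V E \<sigma> \<longrightarrow> tdim V E \<sigma> \<ge> dim_bound V E) \<and>
         (\<exists>\<sigma>. scoring_system V E \<sigma> \<and> tdim V E \<sigma> = dim_bound V E)"
proof -
  interpret tournament V E
    by (rule tournament.intro) fact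
  have M: "matches V E \<noteq> {}"
    using matches_nonempty assms(2) .
  let ?F = "(\<lambda>i. winner (colour_priority i)) ` {..<dim_bound V E}"
  have "tdim V E power2_scoring \<le> card ?F"
    using colour_brackets_resolving by (rule tdim_le_card) simp
  also have "\<dots> \<le> dim_bound V E"
    using card_image_le[of "{..<dim_bound V E}"] by simp
  finally have "tdim V E power2_scoring = dim_bound V E"
    using tdim_ge_dim_bound[OF scoring_system_power2 M] by simp
  then show ?thesis
    using tdim_ge_dim_bound[OF _ M] scoring_system_power2 by blast
qed

end
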